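(* Let $\mathcal F_d$ be a set of OPFs on $\mathbb C^d$ containing the unit OPF ${\bf u}$ and satisfying C1 and the Finiteness Principle, and let $\bar\Gamma^d$ be the associated representation of $\mathrm{SU}(d)$ on the real span $V_d$ of $\mathcal F_d$. Then $\bar\Gamma^d$ contains a unique trivial subrepresentation (the trivial representation occurs exactly once, spanned by ${\bf u}$).
   Context: An OPF on $\mathbb C^d$ is a function from rays of $\mathbb C^d$ to $[0,1]$; the unit OPF is ${\bf u}(\psi)=1$ for all $\psi$. (C1): for $F\in\mathcal F_d$, $U\in\mathrm{SU}(d)$, the function $F\circ U:\psi\mapsto F(U\psi)$ lies in $\mathcal F_d$. Finiteness: $V_d$, the real span of $\mathcal F_d$, is finite-dimensional. The associated representation $\bar\Gamma^d$ is defined on $V_d$ by $\bar\Gamma^d(U)F=F\circ U$, i.e. for a basis $F_i$, $F_i(U\psi)=\sum_j\bar\Gamma_i^{\,j}(U)F_j(\psi)$. *)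

theory Defs
  imports "HOL-Analysis.Analysis"
begin

definition ray :: "complex^'d \<Rightarrow> (complex^'d) set" where
  "ray \<psi> = {c *s \<psi> | c. c \<noteq> 0}"

definition rays :: "(complex^'d) set set" where
  "rays = {ray \<psi> | \<psi>. \<psi> \<noteq> 0}"

text \<open>Functions on rays are represented extensionally (value 0 off the set of rays).\<close>
definition is_OPF :: "((complex^'d) set \<Rightarrow> real) \<Rightarrow> bool" where
  "is_OPF F \<longleftrightarrow> (\<forall>L\<in>rays. 0 \<le> F L \<and> F L \<le> 1) \<and> (\<forall>L. L \<notin> rays \<longrightarrow> F L = 0)"

definition unitOPF :: "(complex^'d) set \<Rightarrow> real" where
  "unitOPF L = (if L \<in> rays then 1 else 0)"

definition cnj_transpose :: "complex^'d^'d \<Rightarrow> complex^'d^'d" where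
  "cnj_transpose U = (\<chi> i j. cnj (U $ j $ i))"

definition SU :: "(complex^'d^'d) set" where
  "SU = {U. U ** cnj_transpose U = mat 1 \<and> cnj_transpose U ** U = mat 1 \<and> det U = 1}"

definition act :: "((complex^'d) set \<Rightarrow> real) \<Rightarrow> complex^'d^'d \<Rightarrow> ((complex^'d) set \<Rightarrow> real)" where
  "act F U = (\<lambda>L. if L \<in> rays then F ((\<lambda>\<psi>. U *v \<psi>) ` L) else 0)"

definition rspan :: "('a \<Rightarrow> real) set \<Rightarrow> ('a \<Rightarrow> real) set" where
  "rspan S = {(\<lambda>x. \<Sum>f\<in>T. c f * f x) | T c. finite T \<and> T \<subseteq> S}"

definition C1 :: "((complex^'d) set \<Rightarrow> real) set \<Rightarrow> bool" where
  "C1 Fd \<longleftrightarrow> (\<forall>F\<in>Fd. \<forall>U\<in>SU. act F U \<in> Fd)"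

definition finiteness :: "('a \<Rightarrow> real) set \<Rightarrow> bool" where
  "finiteness Fd \<longleftrightarrow> (\<exists>B. finite B \<and> rspan Fd \<subseteq> rspan B)"

text \<open>Vectors of V_d fixed by the representation: the trivial isotypic component.\<close>
definition trivial_part :: "((complex^'d) set \<Rightarrow> real) set \<Rightarrow> ((complex^'d) set \<Rightarrow> real) set" where
  "trivial_part Fd = {F \<in> rspan Fd. \<forall>U\<in>SU. act F U = F}"

end

theory Submission
  imports Defs
begin

(* A vector in V_d fixed by all of SU(d) is a function on rays invariant under the action, and
   SU(d) acts transitively on rays; hence such a function is constant on rays, i.e. a multiple
   of u. Transitivity: after rescaling psi within its ray so that psi and phi have the same norm
   and a real inner product, the Householder reflection in psi - phi maps psi to phi; multiplying
   this unitary by a scalar d-th root of the inverse of its determinant lands in SU(d) and still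
   maps the ray of psi onto the ray of phi. *)

definition cinner :: "complex^'n \<Rightarrow> complex^'n \<Rightarrow> complex" where
  "cinner x y = (\<Sum>i\<in>UNIV. cnj (x$i) * y$i)"

lemma cinner_diff_left: "cinner (x - y) z = cinner x z - cinner y z"
  by (simp add: cinner_def algebra_simps sum_subtractf)

lemma cinner_diff_right: "cinner x (y - z) = cinner x y - cinner x z"
  by (simp add: cinner_def algebra_simps sum_subtractf)

lemma cinner_smult_left: "cinner (c *s x) y = cnj c * cinner x y"
  by (simp add: cinner_def sum_distrib_left algebra_simps)

lemma cinner_smult_right: "cinner x (c *s y) = c * cinner x y"
  by (simp add: cinner_def sum_distrib_left algebra_simps)

lemma cnj_cinner: "cnj (cinner x y) = cinner y x"
  by (simp add: cinner_def mult.commute)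

lemma cinner_self: "cinner x x = of_real ((norm x)\<^sup>2)"
proof -
  have "cinner x x = of_real (\<Sum>i\<in>UNIV. (norm (x$i))\<^sup>2)"
    unfolding cinner_def of_real_sum by (rule sum.cong) (simp_all only: complex_norm_square mult.commute)
  also have "(\<Sum>i\<in>UNIV. (norm (x$i))\<^sup>2) = (norm x)\<^sup>2"
    by (simp add: norm_vec_def L2_set_def sum_nonneg)
  finally show ?thesis .
qed

lemma cinner_self_eq_0 [simp]: "cinner x x = 0 \<longleftrightarrow> x = 0"
  by (simp add: cinner_self)

definition householder :: "complex^'n \<Rightarrow> complex^'n^'n" where
  "householder v = mat 1 - (\<chi> i j. (2 / cinner v v) * v$i * cnj (v$j))"

lemma householder_mult: "householder v *v x = x - ((2 / cinner v v) * cinner v x) *s v"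
proof -
  have "(\<chi> i j. (2 / cinner v v) * v$i * cnj (v$j)) *v x = ((2 / cinner v v) * cinner v x) *s v"
    by (simp add: vec_eq_iff matrix_vector_mult_def cinner_def sum_distrib_left sum_divide_distrib algebra_simps)
  then show ?thesis
    by (simp add: householder_def matrix_vector_mult_diff_rdistrib)
qed

lemma householder_adjoint: "cnj_transpose (householder v) = householder v"
proof -
  have "cnj (cinner v v) = cinner v v" by (simp add: cnj_cinner)
  then show ?thesis
    by (simp add: cnj_transpose_def householder_def mat_def vec_eq_iff mult.commute mult.left_commute)
qed

lemma householder_involutive:
  assumes "v \<noteq> 0"
  shows "householder v ** householder v = mat 1"
proof -
  have "householder v *v (householder v *v x) = x" for x
  proof -
    have "cinner v (householder v *v x) = - cinner v x"
      using assms by (simp add: householder_mult cinner_diff_right cinner_smult_right field_simps)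
    then show ?thesis
      by (subst (1) householder_mult) (simp add: householder_mult vector_smult_lneg)
  qed
  then show ?thesis by (simp add: matrix_eq matrix_vector_mul_assoc)
qed

lemma householder_maps:
  assumes "cinner x x = cinner y y" and "cinner y x \<in> \<real>" and "x \<noteq> y"
  shows "householder (x - y) *v x = y"
proof -
  have "cinner x y = cinner y x"
    using assms(2) by (metis Reals_cnj_iff cnj_cinner)
  then have "cinner (x - y) (x - y) = 2 * cinner (x - y) x"
    using assms(1) by (simp add: cinner_diff_left cinner_diff_right)
  moreover have "cinner (x - y) (x - y) \<noteq> 0"
    using assms(3) by simp
  ultimately have "(2 / cinner (x - y) (x - y)) * cinner (x - y) x = 1"
    by simp
  then show ?thesis by (simp add: householder_mult)
qed

definition unitary :: "complex^'n^'n \<Rightarrow> bool" where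
  "unitary U \<longleftrightarrow> U ** cnj_transpose U = mat 1 \<and> cnj_transpose U ** U = mat 1"

lemma unitary_householder: "v \<noteq> 0 \<Longrightarrow> unitary (householder v)"
  by (simp add: unitary_def householder_adjoint householder_involutive)

lemma cnj_transpose_mat [simp]: "cnj_transpose (mat c) = mat (cnj c)"
  by (simp add: cnj_transpose_def mat_def vec_eq_iff)

lemma cnj_transpose_mult: "cnj_transpose (A ** B) = cnj_transpose B ** cnj_transpose A"
  by (simp add: cnj_transpose_def matrix_matrix_mult_def vec_eq_iff mult.commute)

lemma mat_mult_vector: "(mat c :: complex^'n^'n) *v x = c *s x"
proof -
  have "(\<Sum>j\<in>UNIV. (if i = j then c else 0) * x$j) = (\<Sum>j\<in>UNIV. if i = j then c * x$j else 0)" for i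
    by (rule sum.cong) auto
  then show ?thesis by (simp add: vec_eq_iff matrix_vector_mult_def mat_def)
qed

lemma mat_mult_mat: "(mat a ** mat b :: complex^'n^'n) = mat (a * b)"
  by (simp add: matrix_eq mat_mult_vector vector_smult_assoc flip: matrix_vector_mul_assoc)

lemma unitary_mat: "cmod m = 1 \<Longrightarrow> unitary (mat m)"
  by (simp add: unitary_def mat_mult_mat complex_norm_square[symmetric] mult.commute)

lemma unitary_mult: "unitary A \<Longrightarrow> unitary B \<Longrightarrow> unitary (A ** B)"
  unfolding unitary_def cnj_transpose_mult
  by (metis matrix_mul_assoc matrix_mul_lid)

lemma unit_phase_exists: "\<exists>u. cmod u = 1 \<and> u * s \<in> \<real>"
proof (cases "s = 0")
  case False
  have "s * cnj s = of_real (cmod s * cmod s)"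
    by (metis complex_norm_square power2_eq_square)
  then have "cnj s / of_real (cmod s) * s = of_real (cmod s)"
    using False by (simp add: field_simps mult.commute)
  with False show ?thesis
    by (intro exI[of _ "cnj s / of_real (cmod s)"]) (simp add: norm_divide)
qed (auto intro: exI[of _ 1])

lemma rescale_to_match:
  fixes \<psi> \<phi> :: "complex^'n"
  assumes "\<psi> \<noteq> 0" and "\<phi> \<noteq> 0"
  obtains k where "k \<noteq> 0" and "cinner (k *s \<psi>) (k *s \<psi>) = cinner \<phi> \<phi>"
    and "cinner \<phi> (k *s \<psi>) \<in> \<real>"
proof -
  obtain u where u: "cmod u = 1" "u * cinner \<phi> \<psi> \<in> \<real>"
    using unit_phase_exists by blast
  define r where "r = norm \<phi> / norm \<psi>"
  define k where "k = of_real r * u"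
  have "k * cnj k = of_real (r\<^sup>2)"
    using u(1) by (simp add: k_def complex_norm_square[symmetric] power2_eq_square mult_ac)
  then have "cinner (k *s \<psi>) (k *s \<psi>) = of_real (r\<^sup>2) * cinner \<psi> \<psi>"
    by (simp add: cinner_smult_left cinner_smult_right mult.assoc[symmetric])
  also have "\<dots> = of_real (r\<^sup>2 * (norm \<psi>)\<^sup>2)"
    by (simp add: cinner_self)
  also have "r\<^sup>2 * (norm \<psi>)\<^sup>2 = (norm \<phi>)\<^sup>2"
    using assms(1) by (simp add: r_def power_divide)
  finally have "cinner (k *s \<psi>) (k *s \<psi>) = cinner \<phi> \<phi>"
    by (simp only: cinner_self)
  moreover have "cinner \<phi> (k *s \<psi>) \<in> \<real>"
    using u(2) by (simp add: k_def cinner_smult_right mult.assoc)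
  moreover have "k \<noteq> 0"
    using assms u(1) by (auto simp: k_def r_def)
  ultimately show ?thesis using that by blast
qed

lemma unitary_onto_line:
  fixes \<psi> \<phi> :: "complex^'n"
  assumes "\<psi> \<noteq> 0" and "\<phi> \<noteq> 0"
  shows "\<exists>U c. unitary U \<and> c \<noteq> 0 \<and> U *v \<psi> = c *s \<phi>"
proof -
  obtain k where k: "k \<noteq> 0" "cinner (k *s \<psi>) (k *s \<psi>) = cinner \<phi> \<phi>"
    "cinner \<phi> (k *s \<psi>) \<in> \<real>"
    using rescale_to_match[OF assms] .
  obtain U where "unitary U" "U *v (k *s \<psi>) = \<phi>"
  proof (cases "k *s \<psi> = \<phi>")
    case True
    then show ?thesis using that[of "mat 1"] unitary_mat[of 1] by simp
  next
    case False
    then show ?thesis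
      using that householder_maps[OF k(2,3) False] unitary_householder[of "k *s \<psi> - \<phi>"] by simp
  qed
  then have "U *v \<psi> = (1 / k) *s \<phi>"
    using k(1) by (auto simp: vector_scalar_commute vector_smult_assoc)
  moreover have "1 / k \<noteq> 0"
    using k(1) by simp
  ultimately show ?thesis
    using \<open>unitary U\<close> by blast
qed

lemma det_cnj_transpose: "det (cnj_transpose U) = cnj (det U)"
proof -
  have "cnj_transpose U = transpose (\<chi> i j. cnj (U$i$j))"
    by (simp add: cnj_transpose_def transpose_def)
  then have "det (cnj_transpose U) = det (\<chi> i j. cnj (U$i$j))"
    by simp
  also have "\<dots> = cnj (det U)"
    by (simp add: det_def)
  finally show ?thesis .
qed

lemma unitary_det_norm: "unitary U \<Longrightarrow> cmod (det U) = 1"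
proof -
  assume "unitary U"
  then have "of_real ((cmod (det U))\<^sup>2) = (1 :: complex)"
    unfolding unitary_def complex_norm_square
    by (metis det_I det_cnj_transpose det_mul)
  then have "(cmod (det U))\<^sup>2 = 1"
    by (metis of_real_eq_1_iff)
  then show ?thesis
    using norm_ge_zero[of "det U"] by (auto simp: power2_eq_1_iff)
qed

lemma unimodular_inverse_root:
  assumes "cmod z = 1" and "n > 0"
  shows "\<exists>m. cmod m = 1 \<and> m ^ n * z = 1"
proof -
  define t where "t = Arg z"
  have "z = cis t"
    using assms(1) rcis_cmod_Arg[of z] by (simp add: t_def rcis_def)
  moreover have "cis (- t / n) ^ n = cis (n * (- t / n))"
    by (rule Complex.DeMoivre)
  ultimately have "cis (- t / n) ^ n * z = cis (- t) * cis t"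
    using assms(2) by simp
  then have "cis (- t / n) ^ n * z = 1"
    by (simp add: cis_mult)
  then show ?thesis by (intro exI[of _ "cis (- t / n)"]) simp
qed

lemma det_mat_mult: "det (mat m ** U) = m ^ CARD('n) * det (U :: complex^'n^'n)"
proof -
  have "det (mat m :: complex^'n^'n) = m ^ CARD('n)"
    by (subst det_diagonal) (simp_all add: mat_def)
  then show ?thesis by (simp add: det_mul)
qed

lemma SU_iff: "U \<in> SU \<longleftrightarrow> unitary U \<and> det U = 1"
  by (simp add: SU_def unitary_def)

lemma SU_rescale_unitary:
  assumes "unitary (U :: complex^'n^'n)"
  obtains m where "cmod m = 1" and "mat m ** U \<in> SU"
proof -
  obtain m where m: "cmod m = 1" "m ^ CARD('n) * det U = 1"
    using unimodular_inverse_root[OF unitary_det_norm[OF assms], of "CARD('n)"] by auto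
  then have "mat m ** U \<in> SU"
    using assms by (simp add: SU_iff unitary_mult unitary_mat det_mat_mult)
  with m(1) show ?thesis using that by blast
qed

lemma SU_onto_line:
  fixes \<psi> \<phi> :: "complex^'n"
  assumes "\<psi> \<noteq> 0" and "\<phi> \<noteq> 0"
  obtains U c where "U \<in> SU" and "c \<noteq> 0" and "U *v \<psi> = c *s \<phi>"
proof -
  obtain U c where U: "unitary U" "c \<noteq> 0" "U *v \<psi> = c *s \<phi>"
    using unitary_onto_line[OF assms] by blast
  obtain m where m: "cmod m = 1" "mat m ** U \<in> SU"
    using SU_rescale_unitary[OF U(1)] .
  have "(mat m ** U) *v \<psi> = (m * c) *s \<phi>"
    by (simp add: U(3) mat_mult_vector vector_smult_assoc flip: matrix_vector_mul_assoc)
  moreover have "m * c \<noteq> 0"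
    using m(1) U(2) by auto
  ultimately show ?thesis using that m(2) by blast
qed

lemma ray_smult: "c \<noteq> 0 \<Longrightarrow> ray (c *s \<phi>) = ray \<phi>"
proof
  assume c: "c \<noteq> 0"
  show "ray (c *s \<phi>) \<subseteq> ray \<phi>"
    unfolding ray_def using c by (auto simp: vector_smult_assoc)
  show "ray \<phi> \<subseteq> ray (c *s \<phi>)"
    unfolding ray_def
  proof clarify
    fix d :: complex
    assume "d \<noteq> 0"
    then have "d *s \<phi> = (d / c) *s (c *s \<phi>) \<and> d / c \<noteq> 0"
      using c by (simp add: vector_smult_assoc)
    then show "\<exists>e. d *s \<phi> = e *s (c *s \<phi>) \<and> e \<noteq> 0" by blast
  qed
qed

lemma image_ray: "(\<lambda>x. U *v x) ` ray \<psi> = ray (U *v \<psi>)"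
  unfolding ray_def
proof (auto simp: vector_scalar_commute)
  fix c :: complex
  assume "c \<noteq> 0"
  then show "c *s (U *v \<psi>) \<in> (*v) U ` {c *s \<psi> |c. c \<noteq> 0}"
    by (intro image_eqI[of _ _ "c *s \<psi>"]) (auto simp: vector_scalar_commute)
qed

lemma unitary_mult_vector_eq_0_iff: "unitary U \<Longrightarrow> U *v \<psi> = 0 \<longleftrightarrow> \<psi> = 0"
  unfolding unitary_def by (metis matrix_vector_mul_assoc matrix_vector_mul_lid matrix_vector_mult_0_right)

lemma SU_image_rays:
  assumes "U \<in> SU" and "L \<in> rays"
  shows "(\<lambda>x. U *v x) ` L \<in> rays"
proof -
  obtain \<psi> where "\<psi> \<noteq> 0" "L = ray \<psi>"
    using assms(2) by (auto simp: rays_def)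
  moreover have "unitary U"
    using assms(1) by (simp add: SU_iff)
  ultimately show ?thesis
    by (auto simp: rays_def image_ray unitary_mult_vector_eq_0_iff)
qed

lemma SU_transitive_on_rays:
  assumes "L \<in> rays" and "L' \<in> rays"
  obtains U where "U \<in> SU" and "(\<lambda>x. U *v x) ` L = L'"
proof -
  obtain \<psi> \<phi> where "\<psi> \<noteq> 0" "L = ray \<psi>" "\<phi> \<noteq> 0" "L' = ray \<phi>"
    using assms by (auto simp: rays_def)
  moreover obtain U c where "U \<in> SU" "c \<noteq> 0" "U *v \<psi> = c *s \<phi>"
    using SU_onto_line \<open>\<psi> \<noteq> 0\<close> \<open>\<phi> \<noteq> 0\<close> by metis
  ultimately show ?thesis
    using that by (simp add: image_ray ray_smult)
qed

lemma rays_nonempty: "(rays :: (complex^'n) set set) \<noteq> {}"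
proof -
  have "((\<chi> i. 1) :: complex^'n) \<noteq> 0"
    by (simp add: vec_eq_iff)
  then show ?thesis by (auto simp: rays_def)
qed

lemma unitOPF_nonzero: "unitOPF \<noteq> (\<lambda>L. 0)"
  using rays_nonempty by (auto simp: unitOPF_def fun_eq_iff)

lemma act_smult_unitOPF: "U \<in> SU \<Longrightarrow> act (\<lambda>L. c * unitOPF L) U = (\<lambda>L. c * unitOPF L)"
  by (auto simp: act_def unitOPF_def SU_image_rays)

lemma smult_unitOPF_in_rspan: "unitOPF \<in> Fd \<Longrightarrow> (\<lambda>L. c * unitOPF L) \<in> rspan Fd"
  unfolding rspan_def by (rule CollectI, intro exI[of _ "{unitOPF}"] exI[of _ "\<lambda>_. c"]) simp

lemma rspan_vanishes_off_rays:
  assumes "\<forall>F\<in>Fd. is_OPF F" and "F \<in> rspan Fd" and "L \<notin> rays"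
  shows "F L = 0"
proof -
  obtain T c where "T \<subseteq> Fd" "F = (\<lambda>x. \<Sum>f\<in>T. c f * f x)"
    using assms(2) unfolding rspan_def by blast
  with assms(1,3) show ?thesis
    by (auto simp: is_OPF_def intro!: sum.neutral)
qed

lemma SU_invariant_eq_smult_unitOPF:
  assumes "\<And>L. L \<notin> rays \<Longrightarrow> F L = 0" and "\<forall>U\<in>SU. act F U = F" and "L\<^sub>0 \<in> rays"
  shows "F = (\<lambda>L. F L\<^sub>0 * unitOPF L)"
proof
  fix L
  show "F L = F L\<^sub>0 * unitOPF L"
  proof (cases "L \<in> rays")
    case True
    then obtain U where "U \<in> SU" "(\<lambda>x. U *v x) ` L = L\<^sub>0"
      using SU_transitive_on_rays assms(3) by metis
    then have "F L = F L\<^sub>0"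
      using assms(2) True by (metis act_def)
    with True show ?thesis by (simp add: unitOPF_def)
  qed (simp add: assms(1) unitOPF_def)
qed

theorem mainTheorem4:
  fixes Fd :: "((complex^'d) set \<Rightarrow> real) set"
  assumes "\<forall>F\<in>Fd. is_OPF F"
    and "unitOPF \<in> Fd"
    and "C1 Fd"
    and "finiteness Fd"
  shows "trivial_part Fd = {(\<lambda>L. c * unitOPF L) | c. True} \<and> (unitOPF :: (complex^'d) set \<Rightarrow> real) \<noteq> (\<lambda>L. 0)"
proof (intro conjI unitOPF_nonzero)
  obtain L\<^sub>0 :: "(complex^'d) set" where "L\<^sub>0 \<in> rays"
    using rays_nonempty by blast
  have "F \<in> {(\<lambda>L. c * unitOPF L) | c. True}" if "F \<in> trivial_part Fd" for F
  proof -
    have "F = (\<lambda>L. F L\<^sub>0 * unitOPF L)"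
      using that \<open>L\<^sub>0 \<in> rays\<close> rspan_vanishes_off_rays[OF assms(1)]
      by (intro SU_invariant_eq_smult_unitOPF) (auto simp: trivial_part_def)
    then show ?thesis by blast
  qed
  moreover have "(\<lambda>L. c * unitOPF L) \<in> trivial_part Fd" for c
    using assms(2) by (simp add: trivial_part_def smult_unitOPF_in_rspan act_smult_unitOPF)
  ultimately show "trivial_part Fd = {(\<lambda>L. c * unitOPF L) | c. True}"
    by blast
qed

end
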